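(* Let $a>0$, $\alpha>0$, $b\ge 0$, $\sigma^2>0$ and $n>0$ be real numbers. For $s\in(0,n)$ let $V_{\mathrm{FT+PPI}}(s)=\frac{a s^{-\alpha}+b}{n-s}$ and $V_{\mathrm{mean}}=\sigma^2/n$, and define $$q(s)=\sigma^2(n-s)-n\big(a s^{-\alpha}+b\big),\qquad s\in(0,n).$$ Then: (i) there exists $s\in(0,n)$ with $V_{\mathrm{FT+PPI}}(s)<V_{\mathrm{mean}}$ if and only if $\sup_{s\in(0,n)} q(s)>0$; (ii) $q$ is strictly concave on $(0,\infty)$, and there exists $s\in(0,n)$ with $V_{\mathrm{FT+PPI}}(s)<V_{\mathrm{mean}}$ if and only if $$\frac{b}{\sigma^2}<1-\Big(1+\frac1\alpha\Big)\Big(\frac{a\alpha n^{-\alpha}}{\sigma^2}\Big)^{1/(\alpha+1)}.$$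
   Context: Interpretation: $\sigma^2=\mathrm{Var}(Y)$; the residual variance of a predictor fine-tuned on $s$ labeled samples is assumed to follow the scaling law $\mathrm{Var}(Y-f^{(s)}(X))=a s^{-\alpha}+b$; in the regime of infinitely many unlabeled samples the prediction-powered estimator using the remaining $n-s$ labeled samples has variance $V_{\mathrm{FT+PPI}}(s)$, while the sample mean of all $n$ labeled samples has variance $V_{\mathrm{mean}}$. *)

theory Defs
  imports "HOL-Analysis.Analysis"
begin

definition V_FT_PPI :: "real \<Rightarrow> real \<Rightarrow> real \<Rightarrow> real \<Rightarrow> real \<Rightarrow> real" where
  "V_FT_PPI a \<alpha> b n s = (a * s powr (-\<alpha>) + b) / (n - s)"

definition V_mean :: "real \<Rightarrow> real \<Rightarrow> real" where
  "V_mean \<sigma>2 n = \<sigma>2 / n"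

definition q_fun :: "real \<Rightarrow> real \<Rightarrow> real \<Rightarrow> real \<Rightarrow> real \<Rightarrow> real \<Rightarrow> real" where
  "q_fun a \<alpha> b \<sigma>2 n s = \<sigma>2 * (n - s) - n * (a * s powr (-\<alpha>) + b)"

definition strictly_concave_on :: "real set \<Rightarrow> (real \<Rightarrow> real) \<Rightarrow> bool" where
  "strictly_concave_on S f \<longleftrightarrow>
     (\<forall>x\<in>S. \<forall>y\<in>S. \<forall>t::real. x \<noteq> y \<and> 0 < t \<and> t < 1 \<longrightarrow>
        f ((1 - t) * x + t * y) > (1 - t) * f x + t * f y)"

end

theory Submission
  imports Defs
begin

text \<open>
  Clearing the positive denominators, \<open>V_FT_PPI s < V_mean\<close> is exactly \<open>q s > 0\<close>.
  The function \<open>q\<close> is linear minus \<open>n a s powr (-\<alpha>)\<close>; its derivative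
  \<open>n a \<alpha> s powr (-\<alpha>-1) - \<sigma>2\<close> is strictly decreasing, so \<open>q\<close> lies strictly below its
  tangents (mean value theorem), which gives strict concavity and shows that the root
  \<open>s_opt = (n \<alpha> a / \<sigma>2) powr (1/(\<alpha>+1))\<close> of the derivative is the global maximiser on
  \<open>(0, \<infinity>)\<close>. There \<open>q s_opt = \<sigma>2 n - \<sigma>2 (1 + 1/\<alpha>) s_opt - n b\<close>, so \<open>q s_opt > 0\<close> already
  forces \<open>s_opt < n\<close>; dividing by \<open>\<sigma>2 n\<close> turns \<open>q s_opt > 0\<close> into the stated criterion.
\<close>

lemma below_tangent_if_deriv_strict_antimono:
  fixes f f' :: "real \<Rightarrow> real"
  assumes "connected S"
    and deriv: "\<And>x. x \<in> S \<Longrightarrow> (f has_real_derivative f' x) (at x)"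
    and antimono: "\<And>x y. x \<in> S \<Longrightarrow> y \<in> S \<Longrightarrow> x < y \<Longrightarrow> f' y < f' x"
    and "x \<in> S" "z \<in> S" "x \<noteq> z"
  shows "f x < f z + f' z * (x - z)"
proof (cases "x < z")
  case True
  have "{x..z} \<subseteq> S"
    using assms by (intro connected_contains_Icc) auto
  then obtain \<xi> where \<xi>: "x < \<xi>" "\<xi> < z" "f z - f x = (z - x) * f' \<xi>"
    using MVT2[OF True, of f f'] deriv \<open>{x..z} \<subseteq> S\<close> by (meson atLeastAtMost_iff subsetD)
  have "f' z < f' \<xi>"
    using \<xi> \<open>{x..z} \<subseteq> S\<close> \<open>z \<in> S\<close> by (intro antimono) auto
  then have "(z - x) * f' z < (z - x) * f' \<xi>"
    using True by (intro mult_strict_left_mono) auto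
  then show ?thesis
    using \<xi>(3) by (simp add: algebra_simps)
next
  case False
  then have "z < x" using \<open>x \<noteq> z\<close> by simp
  have "{z..x} \<subseteq> S"
    using assms by (intro connected_contains_Icc) auto
  then obtain \<xi> where \<xi>: "z < \<xi>" "\<xi> < x" "f x - f z = (x - z) * f' \<xi>"
    using MVT2[OF \<open>z < x\<close>, of f f'] deriv \<open>{z..x} \<subseteq> S\<close> by (meson atLeastAtMost_iff subsetD)
  have "f' \<xi> < f' z"
    using \<xi> \<open>{z..x} \<subseteq> S\<close> \<open>z \<in> S\<close> by (intro antimono) auto
  then have "(x - z) * f' \<xi> < (x - z) * f' z"
    using \<open>z < x\<close> by (intro mult_strict_left_mono) auto
  then show ?thesis
    using \<xi>(3) by (simp add: algebra_simps)
qed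

lemma strictly_concave_on_if_below_tangents:
  fixes f g :: "real \<Rightarrow> real"
  assumes "convex S"
    and below: "\<And>x z. x \<in> S \<Longrightarrow> z \<in> S \<Longrightarrow> x \<noteq> z \<Longrightarrow> f x < f z + g z * (x - z)"
  shows "strictly_concave_on S f"
  unfolding strictly_concave_on_def
proof (intro ballI allI impI)
  fix x y t :: real
  assume "x \<in> S" "y \<in> S" and xyt: "x \<noteq> y \<and> 0 < t \<and> t < 1"
  define z where "z = (1 - t) * x + t * y"
  have "z \<in> S"
    using \<open>convex S\<close> \<open>x \<in> S\<close> \<open>y \<in> S\<close> xyt unfolding z_def
    by (simp add: convex_alt)
  have "x - z = t * (x - y)" "y - z = (1 - t) * (y - x)"
    unfolding z_def by (simp_all add: algebra_simps)
  then have "x \<noteq> z" "y \<noteq> z"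
    using xyt by auto
  have "(1 - t) * f x + t * f y < (1 - t) * (f z + g z * (x - z)) + t * (f z + g z * (y - z))"
    using below[OF \<open>x \<in> S\<close> \<open>z \<in> S\<close> \<open>x \<noteq> z\<close>] below[OF \<open>y \<in> S\<close> \<open>z \<in> S\<close> \<open>y \<noteq> z\<close>] xyt
    by (intro add_strict_mono mult_strict_left_mono) auto
  also have "\<dots> = f z"
    unfolding z_def by (simp add: algebra_simps)
  finally show "(1 - t) * f x + t * f y < f ((1 - t) * x + t * y)"
    unfolding z_def .
qed

locale ppi_scaling_law =
  fixes a \<alpha> b \<sigma>2 n :: real
  assumes a_pos: "a > 0" and \<alpha>_pos: "\<alpha> > 0" and b_nonneg: "b \<ge> 0"
    and \<sigma>2_pos: "\<sigma>2 > 0" and n_pos: "n > 0"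
begin

abbreviation q :: "real \<Rightarrow> real" where
  "q \<equiv> q_fun a \<alpha> b \<sigma>2 n"

definition q' :: "real \<Rightarrow> real" where
  "q' s = n * a * \<alpha> * s powr (- \<alpha> - 1) - \<sigma>2"

lemma has_real_derivative_q: "s > 0 \<Longrightarrow> (q has_real_derivative q' s) (at s)"
  unfolding q_fun_def q'_def
  by (auto intro!: derivative_eq_intros simp: powr_diff field_simps)

lemma q'_strict_antimono:
  assumes "0 < x" "x < y"
  shows "q' y < q' x"
proof -
  have "y powr (- \<alpha> - 1) < x powr (- \<alpha> - 1)"
    using assms \<alpha>_pos by (intro powr_less_mono2_neg) auto
  then show ?thesis
    using a_pos \<alpha>_pos n_pos by (simp add: q'_def)
qed

lemma q_below_tangent: "x > 0 \<Longrightarrow> z > 0 \<Longrightarrow> x \<noteq> z \<Longrightarrow> q x < q z + q' z * (x - z)"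
  by (rule below_tangent_if_deriv_strict_antimono[where S = "{0<..}"])
    (auto intro: has_real_derivative_q q'_strict_antimono)

lemma strictly_concave_on_q: "strictly_concave_on {0<..} q"
  by (rule strictly_concave_on_if_below_tangents[where g = q']) (auto intro: q_below_tangent)

definition s_opt :: real where
  "s_opt = (n * \<alpha> * a / \<sigma>2) powr (1 / (\<alpha> + 1))"

lemma s_opt_pos: "s_opt > 0"
  using a_pos \<alpha>_pos \<sigma>2_pos n_pos by (simp add: s_opt_def)

lemma s_opt_powr: "s_opt powr (\<alpha> + 1) = n * \<alpha> * a / \<sigma>2"
  using a_pos \<alpha>_pos \<sigma>2_pos n_pos by (simp add: s_opt_def powr_powr)

lemma q'_s_opt: "q' s_opt = 0"
proof -
  have "s_opt powr (- \<alpha> - 1) = inverse (s_opt powr (\<alpha> + 1))"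
    by (simp add: powr_minus[symmetric])
  then show ?thesis
    using a_pos \<alpha>_pos \<sigma>2_pos n_pos by (simp add: q'_def s_opt_powr)
qed

lemma q_le_q_s_opt: "s > 0 \<Longrightarrow> q s \<le> q s_opt"
  using q_below_tangent[OF _ s_opt_pos, of s] by (cases "s = s_opt") (auto simp: q'_s_opt)

lemma q_s_opt: "q s_opt = \<sigma>2 * n - \<sigma>2 * (1 + 1 / \<alpha>) * s_opt - n * b"
proof -
  have "s_opt powr (- \<alpha>) = s_opt powr (- \<alpha> - 1) * s_opt"
    using s_opt_pos by (simp add: powr_diff)
  then have "n * a * s_opt powr (- \<alpha>) = \<sigma>2 / \<alpha> * s_opt"
    using q'_s_opt \<alpha>_pos by (simp add: q'_def field_simps)
  then show ?thesis
    by (simp add: q_fun_def algebra_simps)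
qed

lemma s_opt_div_n: "s_opt / n = (a * \<alpha> * n powr (- \<alpha>) / \<sigma>2) powr (1 / (\<alpha> + 1))"
proof -
  have "n = (n powr (\<alpha> + 1)) powr (1 / (\<alpha> + 1))"
    using n_pos \<alpha>_pos by (simp add: powr_powr)
  then have "s_opt / n = (n * \<alpha> * a / \<sigma>2 / n powr (\<alpha> + 1)) powr (1 / (\<alpha> + 1))"
    using a_pos \<alpha>_pos \<sigma>2_pos n_pos unfolding s_opt_def by (metis powr_divide)
  also have "n * \<alpha> * a / \<sigma>2 / n powr (\<alpha> + 1) = a * \<alpha> * n powr (- \<alpha>) / \<sigma>2"
    using n_pos by (simp add: powr_add powr_minus field_simps)
  finally show ?thesis .
qed

lemma V_FT_PPI_less_V_mean_iff:
  assumes "s < n"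
  shows "V_FT_PPI a \<alpha> b n s < V_mean \<sigma>2 n \<longleftrightarrow> q s > 0"
proof -
  have "V_FT_PPI a \<alpha> b n s < V_mean \<sigma>2 n \<longleftrightarrow> (a * s powr (- \<alpha>) + b) * n < \<sigma>2 * (n - s)"
    using assms n_pos by (simp add: V_FT_PPI_def V_mean_def divide_less_eq less_divide_eq mult.commute)
  then show ?thesis
    by (simp add: q_fun_def algebra_simps)
qed

lemma bdd_above_q: "bdd_above (q ` {0<..<n})"
proof (rule bdd_aboveI2)
  fix s :: real
  assume "s \<in> {0<..<n}"
  then have "\<sigma>2 * s \<ge> 0"
    using \<sigma>2_pos by simp
  moreover have "n * (a * s powr (- \<alpha>) + b) \<ge> 0"
    using a_pos b_nonneg n_pos by simp
  ultimately show "q s \<le> \<sigma>2 * n"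
    by (simp add: q_fun_def algebra_simps)
qed

lemma ex_q_pos_iff_q_s_opt_pos: "(\<exists>s\<in>{0<..<n}. q s > 0) \<longleftrightarrow> q s_opt > 0"
proof
  assume "\<exists>s\<in>{0<..<n}. q s > 0"
  then show "q s_opt > 0"
    using q_le_q_s_opt by fastforce
next
  assume pos: "q s_opt > 0"
  have "\<sigma>2 * s_opt \<le> \<sigma>2 * (1 + 1 / \<alpha>) * s_opt"
    using \<sigma>2_pos \<alpha>_pos s_opt_pos by (simp add: algebra_simps)
  moreover have "n * b \<ge> 0"
    using b_nonneg n_pos by simp
  ultimately have "\<sigma>2 * s_opt < \<sigma>2 * n"
    using pos unfolding q_s_opt by linarith
  then have "s_opt < n"
    using \<sigma>2_pos by simp
  then show "\<exists>s\<in>{0<..<n}. q s > 0"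
    using pos s_opt_pos by auto
qed

lemma q_s_opt_pos_iff:
  "q s_opt > 0 \<longleftrightarrow> b / \<sigma>2 < 1 - (1 + 1 / \<alpha>) * (a * \<alpha> * n powr (- \<alpha>) / \<sigma>2) powr (1 / (\<alpha> + 1))"
proof -
  have "q s_opt > 0 \<longleftrightarrow> b / \<sigma>2 < 1 - (1 + 1 / \<alpha>) * (s_opt / n)"
    using \<sigma>2_pos n_pos by (simp add: q_s_opt field_simps)
  then show ?thesis
    by (simp only: s_opt_div_n)
qed

end

theorem proposition3:
  fixes a \<alpha> b \<sigma>2 n :: real
  assumes "a > 0" and "\<alpha> > 0" and "b \<ge> 0" and "\<sigma>2 > 0" and "n > 0"
  shows "((\<exists>s\<in>{0<..<n}. V_FT_PPI a \<alpha> b n s < V_mean \<sigma>2 n)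
            \<longleftrightarrow> (SUP s\<in>{0<..<n}. q_fun a \<alpha> b \<sigma>2 n s) > 0)
       \<and> strictly_concave_on {0<..} (q_fun a \<alpha> b \<sigma>2 n)
       \<and> ((\<exists>s\<in>{0<..<n}. V_FT_PPI a \<alpha> b n s < V_mean \<sigma>2 n)
            \<longleftrightarrow> b / \<sigma>2 < 1 - (1 + 1 / \<alpha>) * ((a * \<alpha> * n powr (-\<alpha>)) / \<sigma>2) powr (1 / (\<alpha> + 1)))"
proof -
  interpret ppi_scaling_law a \<alpha> b \<sigma>2 n
    using assms by unfold_locales
  have better_iff_q_pos:
    "(\<exists>s\<in>{0<..<n}. V_FT_PPI a \<alpha> b n s < V_mean \<sigma>2 n) \<longleftrightarrow> (\<exists>s\<in>{0<..<n}. q s > 0)"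
    using V_FT_PPI_less_V_mean_iff by auto
  have "(\<exists>s\<in>{0<..<n}. q s > 0) \<longleftrightarrow> (SUP s\<in>{0<..<n}. q s) > 0"
    using less_cSUP_iff[OF _ bdd_above_q, of 0] n_pos by simp
  then show ?thesis
    using better_iff_q_pos strictly_concave_on_q ex_q_pos_iff_q_s_opt_pos q_s_opt_pos_iff
    by simp
qed

end
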